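(* Let $Z=\{P_1,\dots,P_r\}\subset\mathbb{P}^2$ be a finite set of points, let $m>n$ be positive integers and $\alpha=\alpha(I(mZ))-\alpha(I(nZ))$. Let $C$ be an effective divisor of degree $\alpha(I(mZ))$ with $\operatorname{ord}_{P_i}C\ge m$ for all $i$, and let $C=\sum_j a_jC_j$ be its decomposition into distinct irreducible components with multiplicities $a_j\ge1$. Put $\gamma_j=\deg(C_j)$, $m_i^{(j)}=\operatorname{ord}_{P_i}C_j$, $\mathbf{m}^{(j)}=(m_1^{(j)},\dots,m_r^{(j)})$, $n_i^{(j)}=\max\{m_i^{(j)}-(m-n),0\}$, $\mathbf{n}^{(j)}=(n_1^{(j)},\dots,n_r^{(j)})$. Then for each $j$: (i) $\gamma_j=\alpha(I(\mathbf{m}^{(j)}Z))$; (ii) $\alpha(I(\mathbf{m}^{(j)}Z))-\alpha(I(\mathbf{n}^{(j)}Z))\le\alpha$.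
   Context: Work over an algebraically closed field $\mathbb{K}$ of characteristic zero, $R=\mathbb{K}[x_0,x_1,x_2]$. For a point $P\in\mathbb{P}^2$, $I(P)\subset R$ is its homogeneous maximal ideal. For $Z=\{P_1,\dots,P_r\}$ and non-negative integers $\mathbf{m}=(m_1,\dots,m_r)$, $I(\mathbf{m}Z)=I(P_1)^{m_1}\cap\dots\cap I(P_r)^{m_r}$ (with $I(P)^0=R$); $I(mZ)$ is this with all $m_i=m$. For a homogeneous ideal $J$, $\alpha(J)=\min\{n: J_n\neq0\}$ is its initial degree (so $\alpha(R)=0$). $\operatorname{ord}_P$ denotes multiplicity of a divisor at $P$. *)

theory Defs
  imports "HOL-Library.Poly_Mapping" "HOL-Library.Numeral_Type"
          "HOL-Computational_Algebra.Polynomial" "HOL-Computational_Algebra.Factorial_Ring"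
begin

text \<open>Polynomials in three variables x0, x1, x2 (indexed by the 3-element type 3)
  with coefficients in 'a: the ring R = K[x0,x1,x2].\<close>
type_synonym 'a mpoly3 = "(3 \<Rightarrow>\<^sub>0 nat) \<Rightarrow>\<^sub>0 'a"

definition mpeval :: "'a::comm_semiring_1 mpoly3 \<Rightarrow> (3 \<Rightarrow> 'a) \<Rightarrow> 'a" where
  "mpeval F x = (\<Sum>mu\<in>Poly_Mapping.keys F. Poly_Mapping.lookup F mu * (\<Prod>i\<in>UNIV. x i ^ Poly_Mapping.lookup mu i))"

definition mdeg :: "(3 \<Rightarrow>\<^sub>0 nat) \<Rightarrow> nat" where
  "mdeg mu = (\<Sum>i\<in>UNIV. Poly_Mapping.lookup mu i)"

definition homog :: "nat \<Rightarrow> 'a::zero mpoly3 \<Rightarrow> bool" where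
  "homog d F \<longleftrightarrow> (\<forall>mu\<in>Poly_Mapping.keys F. mdeg mu = d)"

definition tdeg :: "'a::zero mpoly3 \<Rightarrow> nat" where
  "tdeg F = Max (mdeg ` Poly_Mapping.keys F)"

text \<open>I(P): homogeneous ideal of the projective point with homogeneous coordinates P
  (P nonzero): polynomials vanishing on the whole line through P, i.e. all of whose
  homogeneous components vanish at P.\<close>
definition pt_ideal :: "(3 \<Rightarrow> 'a::comm_ring_1) \<Rightarrow> 'a mpoly3 set" where
  "pt_ideal P = {F. \<forall>t. mpeval F (\<lambda>i. t * P i) = 0}"

fun ideal_pow :: "'b::comm_ring_1 set \<Rightarrow> nat \<Rightarrow> 'b set" where
  "ideal_pow I 0 = UNIV"
| "ideal_pow I (Suc k) =
     {\<Sum>j<N. f j * g j | (N::nat) f g. \<forall>j<N. f j \<in> ideal_pow I k \<and> g j \<in> I}"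

text \<open>I(mZ) = I(P_1)^{m_1} \<inter> ... \<inter> I(P_r)^{m_r} for Z = {P_0..P_(r-1)}\<close>
definition fat_ideal :: "nat \<Rightarrow> (nat \<Rightarrow> 3 \<Rightarrow> 'a::comm_ring_1) \<Rightarrow> (nat \<Rightarrow> nat) \<Rightarrow> 'a mpoly3 set" where
  "fat_ideal r P mults = (\<Inter>i\<in>{..<r}. ideal_pow (pt_ideal (P i)) (mults i))"

definition alpha :: "'a::zero mpoly3 set \<Rightarrow> nat" where
  "alpha J = (LEAST d. \<exists>F\<in>J. F \<noteq> 0 \<and> homog d F)"

definition ord_pt :: "(3 \<Rightarrow> 'a::comm_ring_1) \<Rightarrow> 'a mpoly3 \<Rightarrow> nat" where
  "ord_pt P F = (GREATEST k. F \<in> ideal_pow (pt_ideal P) k)"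

end

theory Submission
  imports Defs
begin

text \<open>
  Multiplicity at a point is additive on products: after a linear change of coordinates taking
  the point to a coordinate point \<open>e\<^sub>q\<close>, the \<open>k\<close>-th power of its ideal consists of the polynomials
  all of whose monomials have degree at least \<open>k\<close> in the variables other than \<open>x\<^sub>q\<close>, and the
  least such degree of a product is the sum of those of the factors (compare lowest parts).

  Write \<open>F = G\<^sub>j R\<close> with \<open>R\<close> homogeneous of degree \<open>\<rho> = \<alpha>(I(mZ)) - \<gamma>\<^sub>j\<close>. Multiplying a nonzero
  element of \<open>I(\<nu>Z)\<close> of degree \<open>\<alpha>(I(\<nu>Z))\<close> by \<open>R\<close> gives an element of \<open>I(\<mu>Z)\<close> whenever
  \<open>\<mu>\<^sub>i \<le> \<nu>\<^sub>i + ord\<^sub>P\<^sub>i R\<close> for all \<open>i\<close>, so \<open>\<alpha>(I(\<mu>Z)) \<le> \<alpha>(I(\<nu>Z)) + \<rho>\<close>. Taking \<open>\<nu> = m^(j)\<close>, \<open>\<mu> = m\<close>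
  gives \<open>\<gamma>\<^sub>j \<le> \<alpha>(I(m^(j)Z))\<close>, the reverse inequality being witnessed by \<open>G\<^sub>j\<close> itself; taking
  \<open>\<nu> = n^(j)\<close>, \<open>\<mu> = n\<close> gives (ii).
\<close>

section \<open>Substitution into polynomials\<close>

definition is_ring_hom :: "('a::comm_ring_1 \<Rightarrow> 'b::comm_ring_1) \<Rightarrow> bool" where
  "is_ring_hom h \<longleftrightarrow>
     h 0 = 0 \<and> h 1 = 1 \<and> (\<forall>x y. h (x + y) = h x + h y) \<and> (\<forall>x y. h (x * y) = h x * h y)"

lemma is_ring_homD:
  assumes "is_ring_hom h"
  shows "h 0 = 0" "h 1 = 1" "h (x + y) = h x + h y" "h (x * y) = h x * h y"
  using assms by (auto simp: is_ring_hom_def)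

lemma is_ring_hom_id: "is_ring_hom (\<lambda>x. x)"
  by (simp add: is_ring_hom_def)

lemma is_ring_hom_sum: "is_ring_hom h \<Longrightarrow> h (sum f S) = (\<Sum>x\<in>S. h (f x))"
  by (induction S rule: infinite_finite_induct) (auto simp: is_ring_homD)

lemma is_ring_hom_prod: "is_ring_hom h \<Longrightarrow> h (prod f S) = (\<Prod>x\<in>S. h (f x))"
  by (induction S rule: infinite_finite_induct) (auto simp: is_ring_homD)

lemma is_ring_hom_power: "is_ring_hom h \<Longrightarrow> h (x ^ n) = h x ^ n"
  by (induction n) (auto simp: is_ring_homD)

lemma poly_mapping_sum_single:
  "F = (\<Sum>\<mu>\<in>Poly_Mapping.keys F. Poly_Mapping.single \<mu> (Poly_Mapping.lookup F \<mu>))"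
  by (rule poly_mapping_eqI) (simp add: lookup_sum lookup_single when_def in_keys_iff)

definition monom_value :: "(3 \<Rightarrow> 'b::comm_ring_1) \<Rightarrow> (3 \<Rightarrow>\<^sub>0 nat) \<Rightarrow> 'b" where
  "monom_value \<phi> \<mu> = (\<Prod>i\<in>UNIV. \<phi> i ^ Poly_Mapping.lookup \<mu> i)"

definition subst_eval ::
    "('a::comm_ring_1 \<Rightarrow> 'b::comm_ring_1) \<Rightarrow> (3 \<Rightarrow> 'b) \<Rightarrow> 'a mpoly3 \<Rightarrow> 'b" where
  "subst_eval h \<phi> F =
     (\<Sum>\<mu>\<in>Poly_Mapping.keys F. h (Poly_Mapping.lookup F \<mu>) * monom_value \<phi> \<mu>)"

lemma monom_value_add: "monom_value \<phi> (\<mu> + \<nu>) = monom_value \<phi> \<mu> * monom_value \<phi> \<nu>"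
  by (simp add: monom_value_def lookup_add power_add prod.distrib)

lemma is_ring_hom_monom_value:
  "is_ring_hom h \<Longrightarrow> h (monom_value \<phi> \<mu>) = monom_value (\<lambda>i. h (\<phi> i)) \<mu>"
  by (simp add: monom_value_def is_ring_hom_prod is_ring_hom_power)

lemma subst_eval_superset:
  assumes "h 0 = 0" "finite K" "Poly_Mapping.keys F \<subseteq> K"
  shows "subst_eval h \<phi> F = (\<Sum>\<mu>\<in>K. h (Poly_Mapping.lookup F \<mu>) * monom_value \<phi> \<mu>)"
  unfolding subst_eval_def
  by (rule sum.mono_neutral_left) (use assms in \<open>auto simp: in_keys_iff\<close>)

lemma subst_eval_single:
  "is_ring_hom h \<Longrightarrow> subst_eval h \<phi> (Poly_Mapping.single \<mu> c) = h c * monom_value \<phi> \<mu>"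
  by (cases "c = 0") (auto simp: subst_eval_def is_ring_homD)

lemma subst_eval_add:
  assumes h: "is_ring_hom h"
  shows "subst_eval h \<phi> (A + B) = subst_eval h \<phi> A + subst_eval h \<phi> B"
proof -
  let ?K = "Poly_Mapping.keys A \<union> Poly_Mapping.keys B"
  have "subst_eval h \<phi> (A + B) = (\<Sum>\<mu>\<in>?K. h (Poly_Mapping.lookup (A + B) \<mu>) * monom_value \<phi> \<mu>)"
    by (rule subst_eval_superset) (use is_ring_homD(1)[OF h] keys_add[of A B] in auto)
  also have "\<dots> = (\<Sum>\<mu>\<in>?K. h (Poly_Mapping.lookup A \<mu>) * monom_value \<phi> \<mu>)
                + (\<Sum>\<mu>\<in>?K. h (Poly_Mapping.lookup B \<mu>) * monom_value \<phi> \<mu>)"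
    by (simp add: lookup_add is_ring_homD[OF h] distrib_right sum.distrib)
  also have "\<dots> = subst_eval h \<phi> A + subst_eval h \<phi> B"
    by (subst (1 2) subst_eval_superset[where h = h, OF is_ring_homD(1)[OF h]]) auto
  finally show ?thesis .
qed

lemma subst_eval_sum:
  "is_ring_hom h \<Longrightarrow> subst_eval h \<phi> (sum f S) = (\<Sum>x\<in>S. subst_eval h \<phi> (f x))"
proof (induction S rule: infinite_finite_induct)
  case (insert x S)
  then show ?case by (simp add: subst_eval_add)
qed (simp_all add: subst_eval_def)

lemma subst_eval_mult:
  assumes h: "is_ring_hom h"
  shows "subst_eval h \<phi> (A * B) = subst_eval h \<phi> A * subst_eval h \<phi> B"
proof -
  let ?a = "\<lambda>\<mu>. Poly_Mapping.single \<mu> (Poly_Mapping.lookup A \<mu>)"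
  let ?b = "\<lambda>\<nu>. Poly_Mapping.single \<nu> (Poly_Mapping.lookup B \<nu>)"
  have "A * B = (\<Sum>\<mu>\<in>Poly_Mapping.keys A. \<Sum>\<nu>\<in>Poly_Mapping.keys B. ?a \<mu> * ?b \<nu>)"
    by (subst (1 2) poly_mapping_sum_single) (rule sum_product)
  then have "subst_eval h \<phi> (A * B) = (\<Sum>\<mu>\<in>Poly_Mapping.keys A. \<Sum>\<nu>\<in>Poly_Mapping.keys B.
       (h (Poly_Mapping.lookup A \<mu>) * monom_value \<phi> \<mu>) * (h (Poly_Mapping.lookup B \<nu>) * monom_value \<phi> \<nu>))"
    by (simp add: subst_eval_sum[OF h] mult_single subst_eval_single[OF h] is_ring_homD[OF h]
        monom_value_add ac_simps)
  then show ?thesis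
    by (simp add: subst_eval_def sum_product)
qed

lemma is_ring_hom_subst_eval:
  assumes h: "is_ring_hom h"
  shows "is_ring_hom (subst_eval h \<phi>)"
proof -
  have "subst_eval h \<phi> 1 = 1"
    using subst_eval_single[OF h, of \<phi> 0 1] is_ring_homD(2)[OF h] by (simp add: monom_value_def)
  moreover have "subst_eval h \<phi> 0 = 0"
    by (simp add: subst_eval_def)
  ultimately show ?thesis
    by (simp add: is_ring_hom_def subst_eval_add[OF h] subst_eval_mult[OF h])
qed

lemma is_ring_hom_eq_sum_single:
  "is_ring_hom (T :: 'a::comm_ring_1 mpoly3 \<Rightarrow> 'b::comm_ring_1) \<Longrightarrow>
   T F = (\<Sum>\<mu>\<in>Poly_Mapping.keys F. T (Poly_Mapping.single \<mu> (Poly_Mapping.lookup F \<mu>)))"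
  by (subst poly_mapping_sum_single) (simp add: is_ring_hom_sum)

lemma subst_eval_comp:
  assumes T: "is_ring_hom T" and h: "is_ring_hom h"
  shows "T (subst_eval h \<phi> F) = subst_eval (\<lambda>c. T (h c)) (\<lambda>i. T (\<phi> i)) F"
proof -
  have Th: "is_ring_hom (\<lambda>c. T (h c))"
    using T h by (simp add: is_ring_hom_def)
  have "is_ring_hom (\<lambda>F. T (subst_eval h \<phi> F))"
    using T is_ring_hom_subst_eval[OF h] by (simp add: is_ring_hom_def)
  then show ?thesis
    by (subst (1 2) is_ring_hom_eq_sum_single[OF _, where F = F])
      (simp_all add: is_ring_hom_subst_eval[OF Th] subst_eval_single[OF h]
        subst_eval_single[OF Th] is_ring_homD[OF T] is_ring_hom_monom_value[OF T])
qed

lemma mpeval_eq_subst_eval: "mpeval F x = subst_eval (\<lambda>c. c) x F"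
  by (simp add: mpeval_def subst_eval_def monom_value_def)

lemma is_ring_hom_mpeval: "is_ring_hom (\<lambda>F. mpeval F x)"
  by (simp add: mpeval_eq_subst_eval[abs_def] is_ring_hom_subst_eval is_ring_hom_id)

definition mconst :: "'a::comm_ring_1 \<Rightarrow> 'a mpoly3" where
  "mconst c = Poly_Mapping.single 0 c"

definition mvar :: "3 \<Rightarrow> 'a::comm_ring_1 mpoly3" where
  "mvar i = Poly_Mapping.single (Poly_Mapping.single i 1) 1"

lemma is_ring_hom_mconst: "is_ring_hom mconst"
  by (simp add: is_ring_hom_def mconst_def single_add mult_single)

lemma monom_value_mvar: "monom_value mvar \<mu> = (Poly_Mapping.single \<mu> 1 :: 'a::comm_ring_1 mpoly3)"
proof -
  have mvar_power: "(mvar i :: 'a mpoly3) ^ k = Poly_Mapping.single (Poly_Mapping.single i k) 1" for i k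
    by (induction k) (simp_all add: mvar_def mult_single single_add[symmetric] add.commute)
  have "(\<Prod>i\<in>S. (mvar i :: 'a mpoly3) ^ Poly_Mapping.lookup \<mu> i)
      = Poly_Mapping.single (\<Sum>i\<in>S. Poly_Mapping.single i (Poly_Mapping.lookup \<mu> i)) 1"
    if "finite S" for S
    using that by (induction S rule: finite_induct) (simp_all add: mvar_power mult_single)
  moreover have "(\<Sum>i\<in>UNIV. Poly_Mapping.single i (Poly_Mapping.lookup \<mu> i)) = \<mu>"
    by (rule poly_mapping_eqI) (simp add: lookup_sum lookup_single when_def)
  ultimately show ?thesis
    by (simp add: monom_value_def)
qed

lemma subst_eval_mconst_mvar: "subst_eval mconst mvar F = F"
  unfolding subst_eval_def
  by (subst (3) poly_mapping_sum_single, rule sum.cong) (simp_all add: monom_value_mvar mconst_def mult_single)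

lemma subst_eval_mconst: "is_ring_hom h \<Longrightarrow> subst_eval h \<phi> (mconst c) = h c"
  by (simp add: mconst_def subst_eval_single monom_value_def)

lemma subst_eval_mvar: "is_ring_hom h \<Longrightarrow> subst_eval h \<phi> (mvar i) = \<phi> i"
proof -
  have "monom_value \<phi> (Poly_Mapping.single i 1) = (\<Prod>l\<in>UNIV. if i = l then \<phi> l else 1)"
    unfolding monom_value_def by (rule prod.cong) (auto simp: lookup_single when_def)
  then show "is_ring_hom h \<Longrightarrow> ?thesis"
    by (simp add: mvar_def subst_eval_single is_ring_homD)
qed

definition linear_form :: "(3 \<Rightarrow> 3 \<Rightarrow> 'a::comm_ring_1) \<Rightarrow> 3 \<Rightarrow> 'a mpoly3" where
  "linear_form A i = (\<Sum>j\<in>UNIV. mconst (A i j) * mvar j)"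

definition linear_subst :: "(3 \<Rightarrow> 3 \<Rightarrow> 'a::comm_ring_1) \<Rightarrow> 'a mpoly3 \<Rightarrow> 'a mpoly3" where
  "linear_subst A = subst_eval mconst (linear_form A)"

lemma is_ring_hom_linear_subst: "is_ring_hom (linear_subst A)"
  by (simp add: linear_subst_def is_ring_hom_subst_eval is_ring_hom_mconst)

lemma mpeval_linear_subst:
  "mpeval (linear_subst A F) x = mpeval F (\<lambda>i. \<Sum>j\<in>UNIV. A i j * x j)"
proof -
  have "mpeval (linear_form A i) x = (\<Sum>j\<in>UNIV. A i j * x j)" for i
    unfolding linear_form_def is_ring_hom_sum[OF is_ring_hom_mpeval] is_ring_homD(4)[OF is_ring_hom_mpeval]
    by (simp add: mpeval_eq_subst_eval subst_eval_mconst subst_eval_mvar is_ring_hom_id)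
  moreover have "mpeval (mconst c) x = c" for c
    by (simp add: mpeval_eq_subst_eval subst_eval_mconst is_ring_hom_id)
  ultimately show ?thesis
    unfolding linear_subst_def subst_eval_comp[OF is_ring_hom_mpeval is_ring_hom_mconst]
    by (simp add: mpeval_eq_subst_eval)
qed

lemma linear_subst_inverse:
  assumes inverse: "\<And>i l. (\<Sum>j\<in>UNIV. M i j * N j l) = (if i = l then 1 else 0)"
  shows "linear_subst N (linear_subst M F) = F"
proof -
  have "linear_subst N (linear_form M i) = mvar i" for i
  proof -
    have "linear_subst N (linear_form M i)
        = (\<Sum>j\<in>UNIV. mconst (M i j) * (\<Sum>l\<in>UNIV. mconst (N j l) * mvar l))"
      unfolding linear_form_def[of M] is_ring_hom_sum[OF is_ring_hom_linear_subst]
        is_ring_homD(4)[OF is_ring_hom_linear_subst]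
      by (simp add: linear_subst_def subst_eval_mconst subst_eval_mvar is_ring_hom_mconst linear_form_def)
    also have "\<dots> = (\<Sum>l\<in>UNIV. \<Sum>j\<in>UNIV. mconst (M i j * N j l) * mvar l)"
      by (subst sum.swap) (simp add: sum_distrib_left mult.assoc[symmetric] mconst_def mult_single)
    also have "\<dots> = (\<Sum>l\<in>UNIV. mconst (\<Sum>j\<in>UNIV. M i j * N j l) * mvar l)"
      by (simp add: sum_distrib_right is_ring_hom_sum[OF is_ring_hom_mconst])
    also have "\<dots> = (\<Sum>l\<in>UNIV. if i = l then mvar l else 0)"
      by (rule sum.cong) (simp_all add: inverse mconst_def)
    also have "\<dots> = mvar i"
      by simp
    finally show ?thesis .
  qed
  moreover have "linear_subst N (mconst c) = mconst c" for c
    by (simp add: linear_subst_def subst_eval_mconst is_ring_hom_mconst)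
  ultimately show ?thesis
    unfolding linear_subst_def[of M] subst_eval_comp[OF is_ring_hom_linear_subst is_ring_hom_mconst]
    by (simp add: subst_eval_mconst_mvar)
qed

lemma ideal_pow_SucI:
  "F = (\<Sum>j<(N::nat). f j * g j) \<Longrightarrow> \<forall>j<N. f j \<in> ideal_pow I k \<and> g j \<in> I
    \<Longrightarrow> F \<in> ideal_pow I (Suc k)"
  by auto

lemma ideal_pow_SucE:
  assumes "F \<in> ideal_pow I (Suc k)"
  obtains N :: nat and f g where "F = (\<Sum>j<N. f j * g j)" "\<forall>j<N. f j \<in> ideal_pow I k \<and> g j \<in> I"
  using assms by auto

declare ideal_pow.simps(2) [simp del]

lemma ideal_pow_image:
  assumes h: "is_ring_hom h" and hI: "\<forall>x\<in>I. h x \<in> J"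
  shows "F \<in> ideal_pow I k \<Longrightarrow> h F \<in> ideal_pow J k"
proof (induction k arbitrary: F)
  case (Suc k)
  from Suc.prems obtain N :: nat and f g
    where F: "F = (\<Sum>j<N. f j * g j)" and fg: "\<forall>j<N. f j \<in> ideal_pow I k \<and> g j \<in> I"
    by (rule ideal_pow_SucE)
  have "h F = (\<Sum>j<N. h (f j) * h (g j))"
    by (simp add: F is_ring_hom_sum[OF h] is_ring_homD[OF h])
  then show ?case
    by (rule ideal_pow_SucI) (use fg Suc.IH hI in blast)
qed simp

lemma ideal_pow_Suc_mult: "f \<in> ideal_pow I k \<Longrightarrow> g \<in> I \<Longrightarrow> f * g \<in> ideal_pow I (Suc k)"
  by (rule ideal_pow_SucI[where N = 1 and f = "\<lambda>_. f" and g = "\<lambda>_. g"]) simp_all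

lemma sum_lessThan_add_nat:
  "(\<Sum>j<N1 + (N2::nat). h j) = (\<Sum>j<N1. h j) + (\<Sum>j<N2. h (N1 + j))"
  by (induction N2) (simp_all add: ac_simps)

lemma ideal_pow_Suc_add:
  assumes "A \<in> ideal_pow I (Suc k)" "B \<in> ideal_pow I (Suc k)"
  shows "A + B \<in> ideal_pow I (Suc k)"
proof -
  obtain N1 :: nat and f1 g1
    where A: "A = (\<Sum>j<N1. f1 j * g1 j)" and fg1: "\<forall>j<N1. f1 j \<in> ideal_pow I k \<and> g1 j \<in> I"
    using assms(1) by (rule ideal_pow_SucE)
  obtain N2 :: nat and f2 g2
    where B: "B = (\<Sum>j<N2. f2 j * g2 j)" and fg2: "\<forall>j<N2. f2 j \<in> ideal_pow I k \<and> g2 j \<in> I"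
    using assms(2) by (rule ideal_pow_SucE)
  define f where "f j = (if j < N1 then f1 j else f2 (j - N1))" for j
  define g where "g j = (if j < N1 then g1 j else g2 (j - N1))" for j
  have "A + B = (\<Sum>j<N1 + N2. f j * g j)"
    unfolding sum_lessThan_add_nat A B f_def g_def by simp
  moreover have "\<forall>j<N1 + N2. f j \<in> ideal_pow I k \<and> g j \<in> I"
    using fg1 fg2 unfolding f_def g_def by auto
  ultimately show ?thesis
    by (rule ideal_pow_SucI)
qed

lemma ideal_pow_Suc_sum:
  "finite S \<Longrightarrow> (\<And>x. x \<in> S \<Longrightarrow> h x \<in> ideal_pow I (Suc k)) \<Longrightarrow> sum h S \<in> ideal_pow I (Suc k)"
proof (induction S rule: finite_induct)
  case empty
  show ?case
    by (rule ideal_pow_SucI[where N = 0]) simp_all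
qed (simp add: ideal_pow_Suc_add)

section \<open>The ideal of a coordinate point\<close>

definition off_degree :: "3 \<Rightarrow> (3 \<Rightarrow>\<^sub>0 nat) \<Rightarrow> nat" where
  "off_degree q \<mu> = (\<Sum>i\<in>UNIV - {q}. Poly_Mapping.lookup \<mu> i)"

definition off_degree_ge :: "3 \<Rightarrow> nat \<Rightarrow> 'a::comm_ring_1 mpoly3 set" where
  "off_degree_ge q w = {F. \<forall>\<mu>\<in>Poly_Mapping.keys F. w \<le> off_degree q \<mu>}"

definition min_off_degree :: "3 \<Rightarrow> 'a::comm_ring_1 mpoly3 \<Rightarrow> nat" where
  "min_off_degree q F = Min (off_degree q ` Poly_Mapping.keys F)"

lemma off_degree_add: "off_degree q (\<mu> + \<nu>) = off_degree q \<mu> + off_degree q \<nu>"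
  by (simp add: off_degree_def lookup_add sum.distrib)

lemma off_degree_single: "i \<noteq> q \<Longrightarrow> off_degree q (Poly_Mapping.single i k) = k"
  unfolding off_degree_def lookup_single when_def by (simp add: eq_commute[of i])

lemma off_degree_eq_0D: "off_degree q \<mu> = 0 \<Longrightarrow> i \<noteq> q \<Longrightarrow> Poly_Mapping.lookup \<mu> i = 0"
  unfolding off_degree_def by (simp add: sum_eq_0_iff)

lemma off_degree_ge_add:
  "A \<in> off_degree_ge q w \<Longrightarrow> B \<in> off_degree_ge q w \<Longrightarrow> A + B \<in> off_degree_ge q w"
  using keys_add[of A B] by (auto simp: off_degree_ge_def)

lemma off_degree_ge_sum:
  "(\<And>x. x \<in> S \<Longrightarrow> h x \<in> off_degree_ge q w) \<Longrightarrow> sum h S \<in> off_degree_ge q w"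
proof (induction S rule: infinite_finite_induct)
  case (insert x S)
  then show ?case by (simp add: off_degree_ge_add)
qed (simp_all add: off_degree_ge_def)

lemma off_degree_ge_mult:
  assumes "A \<in> off_degree_ge q a" "B \<in> off_degree_ge q b"
  shows "A * B \<in> off_degree_ge q (a + b)"
  unfolding off_degree_ge_def mem_Collect_eq
proof
  fix \<mu> assume "\<mu> \<in> Poly_Mapping.keys (A * B)"
  then obtain x y where "\<mu> = x + y" "x \<in> Poly_Mapping.keys A" "y \<in> Poly_Mapping.keys B"
    using keys_mult[of A B] by blast
  then show "a + b \<le> off_degree q \<mu>"
    using assms by (auto simp: off_degree_ge_def off_degree_add intro: add_mono)
qed

lemma ideal_pow_off_degree_ge_subset: "F \<in> ideal_pow (off_degree_ge q 1) k \<Longrightarrow> F \<in> off_degree_ge q k"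
proof (induction k arbitrary: F)
  case 0
  then show ?case by (simp add: off_degree_ge_def)
next
  case (Suc k)
  from Suc.prems obtain N :: nat and f g where F: "F = (\<Sum>j<N. f j * g j)"
    and fg: "\<forall>j<N. f j \<in> ideal_pow (off_degree_ge q 1) k \<and> g j \<in> off_degree_ge q 1"
    by (rule ideal_pow_SucE)
  have "f j * g j \<in> off_degree_ge q (Suc k)" if "j < N" for j
    using off_degree_ge_mult[of "f j" q k "g j" 1] Suc.IH fg that by simp
  then show ?case
    unfolding F by (intro off_degree_ge_sum) simp
qed

lemma off_degree_ge_subset_ideal_pow:
  fixes F :: "'a::comm_ring_1 mpoly3"
  shows "F \<in> off_degree_ge q k \<Longrightarrow> F \<in> ideal_pow (off_degree_ge q 1) k"
proof (induction k arbitrary: F)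
  case (Suc k)
  have "Poly_Mapping.single \<mu> c \<in> ideal_pow (off_degree_ge q 1) (Suc k)"
    if \<mu>: "Suc k \<le> off_degree q \<mu>" for \<mu> and c :: 'a
  proof -
    have "off_degree q \<mu> \<noteq> 0"
      using \<mu> by simp
    then obtain i where i: "i \<noteq> q" "Poly_Mapping.lookup \<mu> i \<noteq> 0"
      unfolding off_degree_def by (auto simp: sum_eq_0_iff)
    define \<nu> where "\<nu> = \<mu> - Poly_Mapping.single i 1"
    have \<mu>_eq: "\<mu> = \<nu> + Poly_Mapping.single i 1"
      by (rule poly_mapping_eqI) (use i in \<open>auto simp: \<nu>_def lookup_add lookup_minus lookup_single when_def\<close>)
    then have "k \<le> off_degree q \<nu>"
      using \<mu> off_degree_add[of q \<nu>] off_degree_single[OF i(1)] by simp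
    then have "Poly_Mapping.single \<nu> c \<in> ideal_pow (off_degree_ge q 1) k"
      by (intro Suc.IH) (simp add: off_degree_ge_def)
    moreover have "Poly_Mapping.single (Poly_Mapping.single i 1) 1 \<in> off_degree_ge q 1"
      using off_degree_single[OF i(1)] by (simp add: off_degree_ge_def)
    ultimately show ?thesis
      using ideal_pow_Suc_mult by (fastforce simp: mult_single \<mu>_eq)
  qed
  then show ?case
    using Suc.prems by (subst poly_mapping_sum_single) (auto simp: off_degree_ge_def intro: ideal_pow_Suc_sum)
qed simp

lemma ideal_pow_off_degree_ge: "ideal_pow (off_degree_ge q 1) k = off_degree_ge q k"
  using ideal_pow_off_degree_ge_subset off_degree_ge_subset_ideal_pow by blast

lemma off_degree_ge_iff: "F \<noteq> 0 \<Longrightarrow> F \<in> off_degree_ge q w \<longleftrightarrow> w \<le> min_off_degree q F"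
  unfolding off_degree_ge_def min_off_degree_def by (auto simp: Min_ge_iff)

lemma min_off_degree_le: "\<mu> \<in> Poly_Mapping.keys F \<Longrightarrow> min_off_degree q F \<le> off_degree q \<mu>"
  unfolding min_off_degree_def by simp

lemma min_off_degree_attained:
  assumes "F \<noteq> 0"
  shows "\<exists>\<mu>\<in>Poly_Mapping.keys F. off_degree q \<mu> = min_off_degree q F"
proof -
  have "Min (off_degree q ` Poly_Mapping.keys F) \<in> off_degree q ` Poly_Mapping.keys F"
    using assms by (intro Min_in) auto
  then show ?thesis
    unfolding min_off_degree_def by (metis imageE)
qed

lemma lowest_off_degree_part:
  assumes "A \<noteq> 0"
  obtains Al Ah where "A = Al + Ah" "Al \<noteq> 0"
    "\<forall>\<mu>\<in>Poly_Mapping.keys Al. off_degree q \<mu> = min_off_degree q A"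
    "Ah \<in> off_degree_ge q (Suc (min_off_degree q A))"
proof -
  let ?a = "min_off_degree q A"
  let ?S = "{\<mu>\<in>Poly_Mapping.keys A. off_degree q \<mu> = ?a}"
  define Al where "Al = (\<Sum>\<mu>\<in>?S. Poly_Mapping.single \<mu> (Poly_Mapping.lookup A \<mu>))"
  have lookup_Al: "Poly_Mapping.lookup Al \<mu> = (if \<mu> \<in> ?S then Poly_Mapping.lookup A \<mu> else 0)" for \<mu>
    unfolding Al_def by (simp add: lookup_sum lookup_single when_def)
  obtain \<mu>0 where "\<mu>0 \<in> ?S"
    using min_off_degree_attained[OF assms] by blast
  then have "Poly_Mapping.lookup Al \<mu>0 \<noteq> 0"
    by (simp add: lookup_Al in_keys_iff)
  then have "Al \<noteq> 0"
    by auto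
  moreover have "\<forall>\<mu>\<in>Poly_Mapping.keys Al. off_degree q \<mu> = ?a"
    using lookup_Al by (auto simp: in_keys_iff split: if_splits)
  moreover have "A - Al \<in> off_degree_ge q (Suc ?a)"
    unfolding off_degree_ge_def mem_Collect_eq
  proof
    fix \<mu> assume "\<mu> \<in> Poly_Mapping.keys (A - Al)"
    then have "\<mu> \<in> Poly_Mapping.keys A" "off_degree q \<mu> \<noteq> ?a"
      using lookup_Al[of \<mu>] by (auto simp: in_keys_iff lookup_minus split: if_splits)
    then show "Suc ?a \<le> off_degree q \<mu>"
      using min_off_degree_le[of \<mu> A q] by simp
  qed
  ultimately show ?thesis
    using that[of Al "A - Al"] by simp
qed

lemma min_off_degree_mult:
  fixes A B :: "'a::field mpoly3"
  assumes A: "A \<noteq> 0" and B: "B \<noteq> 0"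
  shows "min_off_degree q (A * B) = min_off_degree q A + min_off_degree q B"
proof (rule antisym)
  let ?a = "min_off_degree q A" and ?b = "min_off_degree q B"
  have AB: "A * B \<noteq> 0"
    using A B by simp
  have "A \<in> off_degree_ge q ?a" "B \<in> off_degree_ge q ?b"
    using off_degree_ge_iff A B by auto
  then show "?a + ?b \<le> min_off_degree q (A * B)"
    using off_degree_ge_iff[OF AB] off_degree_ge_mult by blast
  obtain Al Ah where A_split: "A = Al + Ah" "Al \<noteq> 0"
      "\<forall>\<mu>\<in>Poly_Mapping.keys Al. off_degree q \<mu> = ?a" "Ah \<in> off_degree_ge q (Suc ?a)"
    using lowest_off_degree_part[OF A] by blast
  obtain Bl Bh where B_split: "B = Bl + Bh" "Bl \<noteq> 0"
      "\<forall>\<mu>\<in>Poly_Mapping.keys Bl. off_degree q \<mu> = ?b" "Bh \<in> off_degree_ge q (Suc ?b)"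
    using lowest_off_degree_part[OF B] by blast
  have "Al \<in> off_degree_ge q ?a" "B \<in> off_degree_ge q ?b"
    using A_split(3) off_degree_ge_iff[OF B] by (auto simp: off_degree_ge_def)
  then have higher: "Al * Bh + Ah * B \<in> off_degree_ge q (Suc (?a + ?b))"
    using off_degree_ge_mult[of Al q ?a Bh "Suc ?b"] off_degree_ge_mult[of Ah q "Suc ?a" B ?b]
      A_split(4) B_split(4) by (simp add: off_degree_ge_add)
  have "Al * Bl \<noteq> 0"
    using A_split(2) B_split(2) by simp
  then obtain \<mu> where \<mu>: "\<mu> \<in> Poly_Mapping.keys (Al * Bl)"
    by (metis all_not_in_conv keys_eq_empty)
  then have "off_degree q \<mu> = ?a + ?b"
    using keys_mult[of Al Bl] A_split(3) B_split(3) by (auto simp: off_degree_add)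
  moreover have "A * B = Al * Bl + (Al * Bh + Ah * B)"
    using A_split(1) B_split(1) by (simp add: algebra_simps)
  moreover have "\<mu> \<notin> Poly_Mapping.keys (Al * Bh + Ah * B)"
    using higher calculation(1) by (auto simp: off_degree_ge_def)
  ultimately have "\<mu> \<in> Poly_Mapping.keys (A * B)"
    using \<mu> by (simp add: in_keys_iff lookup_add)
  then show "min_off_degree q (A * B) \<le> ?a + ?b"
    using min_off_degree_le \<open>off_degree q \<mu> = ?a + ?b\<close> by metis
qed

definition unit_point :: "3 \<Rightarrow> 3 \<Rightarrow> 'a::comm_ring_1" where
  "unit_point q i = (if i = q then 1 else 0)"

lemma mpeval_unit_point:
  "mpeval (F :: 'a::field mpoly3) (\<lambda>i. t * unit_point q i) =
    (\<Sum>\<mu>\<in>{\<mu>\<in>Poly_Mapping.keys F. off_degree q \<mu> = 0}.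
       Poly_Mapping.lookup F \<mu> * t ^ Poly_Mapping.lookup \<mu> q)"
proof -
  have "monom_value (\<lambda>i. t * unit_point q i) \<mu> =
      (if off_degree q \<mu> = 0 then t ^ Poly_Mapping.lookup \<mu> q else 0)" for \<mu>
  proof (cases "off_degree q \<mu> = 0")
    case True
    have "monom_value (\<lambda>i. t * unit_point q i) \<mu> =
        (\<Prod>i\<in>UNIV. if i = q then t ^ Poly_Mapping.lookup \<mu> q else 1)"
      unfolding monom_value_def by (rule prod.cong) (auto simp: unit_point_def off_degree_eq_0D[OF True])
    then show ?thesis
      using True by simp
  next
    case False
    then obtain i where "i \<noteq> q" "Poly_Mapping.lookup \<mu> i \<noteq> 0"
      unfolding off_degree_def by (auto simp: sum_eq_0_iff)
    then have "(t * unit_point q i) ^ Poly_Mapping.lookup \<mu> i = (0::'a)"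
      by (simp add: unit_point_def)
    then show ?thesis
      using False unfolding monom_value_def by (meson UNIV_I finite prod_zero)
  qed
  then have "mpeval F (\<lambda>i. t * unit_point q i) = (\<Sum>\<mu>\<in>Poly_Mapping.keys F.
      if off_degree q \<mu> = 0 then Poly_Mapping.lookup F \<mu> * t ^ Poly_Mapping.lookup \<mu> q else 0)"
    unfolding mpeval_eq_subst_eval subst_eval_def by (intro sum.cong) simp_all
  then show ?thesis
    by (simp add: sum.inter_filter)
qed

lemma pt_ideal_unit_point: "pt_ideal (unit_point q) = (off_degree_ge q 1 :: 'a::field_char_0 mpoly3 set)"
proof (intro set_eqI iffI)
  fix F :: "'a mpoly3"
  assume "F \<in> off_degree_ge q 1"
  then have no_pure_power: "{\<mu>\<in>Poly_Mapping.keys F. off_degree q \<mu> = 0} = {}"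
    by (auto simp: off_degree_ge_def)
  show "F \<in> pt_ideal (unit_point q)"
    unfolding pt_ideal_def mem_Collect_eq mpeval_unit_point no_pure_power by simp
next
  fix F :: "'a mpoly3"
  assume F: "F \<in> pt_ideal (unit_point q)"
  let ?S = "{\<mu>\<in>Poly_Mapping.keys F. off_degree q \<mu> = 0}"
  show "F \<in> off_degree_ge q 1"
  proof (rule ccontr)
    assume "F \<notin> off_degree_ge q 1"
    then obtain \<mu>0 where \<mu>0: "\<mu>0 \<in> Poly_Mapping.keys F" "off_degree q \<mu>0 = 0"
      by (auto simp: off_degree_ge_def)
    text \<open>On the line through \<open>e\<^sub>q\<close>, \<open>F\<close> restricts to a univariate polynomial vanishing
      everywhere; distinct monomials of \<open>?S\<close> have distinct \<open>x\<^sub>q\<close>-degrees.\<close>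
    define p where "p = (\<Sum>\<mu>\<in>?S. monom (Poly_Mapping.lookup F \<mu>) (Poly_Mapping.lookup \<mu> q))"
    have "poly p t = mpeval F (\<lambda>i. t * unit_point q i)" for t
      by (simp add: p_def poly_sum poly_monom mpeval_unit_point)
    then have "\<forall>t. poly p t = 0"
      using F by (simp add: pt_ideal_def)
    then have "p = 0"
      using poly_all_0_iff_0 by blast
    then have "coeff p (Poly_Mapping.lookup \<mu>0 q) = 0"
      by simp
    moreover have "Poly_Mapping.lookup \<mu> q = Poly_Mapping.lookup \<mu>0 q \<longleftrightarrow> \<mu> = \<mu>0" if "\<mu> \<in> ?S" for \<mu>
    proof
      assume "Poly_Mapping.lookup \<mu> q = Poly_Mapping.lookup \<mu>0 q"
      moreover have "off_degree q \<mu> = 0"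
        using that by simp
      ultimately show "\<mu> = \<mu>0"
        using off_degree_eq_0D[of q \<mu>] off_degree_eq_0D[OF \<mu>0(2)]
        by (intro poly_mapping_eqI) (metis (full_types))
    qed simp
    then have "coeff p (Poly_Mapping.lookup \<mu>0 q) = (\<Sum>\<mu>\<in>?S. if \<mu> = \<mu>0 then Poly_Mapping.lookup F \<mu> else 0)"
      unfolding p_def coeff_sum coeff_monom by (intro sum.cong) auto
    also have "\<dots> = Poly_Mapping.lookup F \<mu>0"
      using \<mu>0 by simp
    ultimately show False
      using \<mu>0(1) by (simp add: in_keys_iff)
  qed
qed

section \<open>Multiplicity at a point\<close>

text \<open>\<open>to_point_matrix P q\<close> maps \<open>e\<^sub>q\<close> to \<open>P\<close>; \<open>from_point_matrix P q\<close> is its inverse.\<close>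

definition to_point_matrix :: "(3 \<Rightarrow> 'a::field) \<Rightarrow> 3 \<Rightarrow> 3 \<Rightarrow> 3 \<Rightarrow> 'a" where
  "to_point_matrix P q i j = (if j = q then P i else if i = j then 1 else 0)"

definition from_point_matrix :: "(3 \<Rightarrow> 'a::field) \<Rightarrow> 3 \<Rightarrow> 3 \<Rightarrow> 3 \<Rightarrow> 'a" where
  "from_point_matrix P q i j =
     (if j = q then (if i = q then 1 / P q else - P i / P q) else if i = j then 1 else 0)"

lemma sum_if_eq_if_eq:
  fixes q i :: "'n::finite"
  shows "(\<Sum>j\<in>UNIV. if j = q then a else if i = j then b else 0) = a + (if i = q then 0 else b)"
proof -
  have "(\<Sum>j\<in>UNIV. if j = q then a else if i = j then b else 0)
      = a + (\<Sum>j\<in>UNIV - {q}. if i = j then b else 0)"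
    by (subst sum.remove[OF finite, of q]) (auto intro!: sum.cong)
  then show ?thesis
    by (simp add: sum.delta)
qed

lemma to_from_point_matrix:
  assumes "P q \<noteq> 0"
  shows "(\<Sum>j\<in>UNIV. to_point_matrix P q i j * from_point_matrix P q j l) = (if i = l then 1 else 0)"
proof -
  have "to_point_matrix P q i j * from_point_matrix P q j l =
      (if j = q then P i * from_point_matrix P q q l else if i = j then from_point_matrix P q i l else 0)"
    for j by (simp add: to_point_matrix_def)
  then show ?thesis
    using assms by (simp add: sum_if_eq_if_eq) (cases "l = q"; cases "i = q"; simp add: from_point_matrix_def)
qed

lemma to_point_matrix_unit_point:
  "(\<Sum>j\<in>UNIV. to_point_matrix P q i j * (t * unit_point q j)) = t * P i"
  by (simp add: to_point_matrix_def unit_point_def if_distrib[of "\<lambda>x. x * _"] cong: if_cong)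

lemma from_point_matrix_point:
  assumes "P q \<noteq> 0"
  shows "(\<Sum>j\<in>UNIV. from_point_matrix P q i j * (t * P j)) = t * unit_point q i"
proof -
  have "from_point_matrix P q i j * (t * P j) =
      (if j = q then (if i = q then t else - t * P i) else if i = j then t * P i else 0)" for j
    using assms by (simp add: from_point_matrix_def)
  then show ?thesis
    by (simp add: sum_if_eq_if_eq unit_point_def)
qed

context
  fixes P :: "3 \<Rightarrow> 'a::field_char_0" and q :: 3
  assumes Pq: "P q \<noteq> 0"
begin

lemma ideal_pow_pt_ideal_iff:
  "F \<in> ideal_pow (pt_ideal P) k \<longleftrightarrow> linear_subst (to_point_matrix P q) F \<in> off_degree_ge q k"
proof
  have "\<forall>F\<in>pt_ideal P. linear_subst (to_point_matrix P q) F \<in> pt_ideal (unit_point q)"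
    by (simp add: pt_ideal_def mpeval_linear_subst to_point_matrix_unit_point)
  then show "F \<in> ideal_pow (pt_ideal P) k \<Longrightarrow> linear_subst (to_point_matrix P q) F \<in> off_degree_ge q k"
    using ideal_pow_image[OF is_ring_hom_linear_subst]
    by (metis pt_ideal_unit_point ideal_pow_off_degree_ge)
next
  have "\<forall>F\<in>pt_ideal (unit_point q). linear_subst (from_point_matrix P q) F \<in> pt_ideal P"
    by (simp add: pt_ideal_def mpeval_linear_subst from_point_matrix_point[of P q, OF Pq])
  moreover have "linear_subst (from_point_matrix P q) (linear_subst (to_point_matrix P q) F) = F"
    by (rule linear_subst_inverse) (rule to_from_point_matrix[of P q, OF Pq])
  ultimately show "linear_subst (to_point_matrix P q) F \<in> off_degree_ge q k \<Longrightarrow> F \<in> ideal_pow (pt_ideal P) k"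
    using ideal_pow_image[OF is_ring_hom_linear_subst]
    by (metis pt_ideal_unit_point ideal_pow_off_degree_ge)
qed

lemma linear_subst_to_point_matrix_nonzero:
  "F \<noteq> 0 \<Longrightarrow> linear_subst (to_point_matrix P q) F \<noteq> 0"
  using linear_subst_inverse[OF to_from_point_matrix[of P q, OF Pq], of F]
    is_ring_homD(1)[OF is_ring_hom_linear_subst] by metis

lemma ord_pt_eq_min_off_degree:
  assumes "F \<noteq> 0"
  shows "ord_pt P F = min_off_degree q (linear_subst (to_point_matrix P q) F)"
  unfolding ord_pt_def
  using ideal_pow_pt_ideal_iff off_degree_ge_iff[OF linear_subst_to_point_matrix_nonzero[OF assms]]
  by (intro Greatest_equality) blast+

end

lemma mem_ideal_pow_pt_ideal_iff:
  fixes P :: "3 \<Rightarrow> 'a::field_char_0"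
  assumes "\<exists>u. P u \<noteq> 0" "F \<noteq> 0"
  shows "F \<in> ideal_pow (pt_ideal P) k \<longleftrightarrow> k \<le> ord_pt P F"
proof -
  obtain q where q: "P q \<noteq> 0"
    using assms(1) by blast
  show ?thesis
    using ideal_pow_pt_ideal_iff[of P q, OF q] ord_pt_eq_min_off_degree[of P q, OF q assms(2)]
      off_degree_ge_iff[OF linear_subst_to_point_matrix_nonzero[of P q, OF q assms(2)]] by simp
qed

lemma ord_pt_mult:
  fixes P :: "3 \<Rightarrow> 'a::field_char_0"
  assumes "\<exists>u. P u \<noteq> 0" "A \<noteq> 0" "B \<noteq> 0"
  shows "ord_pt P (A * B) = ord_pt P A + ord_pt P B"
proof -
  obtain q where q: "P q \<noteq> 0"
    using assms(1) by blast
  have "A * B \<noteq> 0"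
    using assms by simp
  then show ?thesis
    using ord_pt_eq_min_off_degree[of P q, OF q] assms(2,3)
      min_off_degree_mult[OF linear_subst_to_point_matrix_nonzero[of P q, OF q assms(2)]
        linear_subst_to_point_matrix_nonzero[of P q, OF q assms(3)]]
    by (simp add: is_ring_homD(4)[OF is_ring_hom_linear_subst])
qed

section \<open>Initial degrees of fat point ideals\<close>

lemma homog_mult:
  assumes "homog a A" "homog b B"
  shows "homog (a + b) (A * B)"
  unfolding homog_def
proof
  fix \<mu> assume "\<mu> \<in> Poly_Mapping.keys (A * B)"
  then obtain x y where "\<mu> = x + y" "x \<in> Poly_Mapping.keys A" "y \<in> Poly_Mapping.keys B"
    using keys_mult[of A B] by blast
  then show "mdeg \<mu> = a + b"
    using assms by (simp add: homog_def mdeg_def lookup_add sum.distrib)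
qed

lemma homog_one: "homog 0 (1 :: 'a::comm_ring_1 mpoly3)"
  by (simp add: homog_def mdeg_def)

lemma homog_const: "homog 0 (Poly_Mapping.single 0 (c::'a::comm_ring_1))"
  by (simp add: homog_def mdeg_def)

lemma homog_power: "homog d (A :: 'a::comm_ring_1 mpoly3) \<Longrightarrow> homog (n * d) (A ^ n)"
  by (induction n) (simp_all add: homog_one homog_mult)

lemma homog_prod:
  "(\<And>k. k \<in> S \<Longrightarrow> homog (d k) (f k :: 'a::comm_ring_1 mpoly3)) \<Longrightarrow> homog (\<Sum>k\<in>S. d k) (\<Prod>k\<in>S. f k)"
  by (induction S rule: infinite_finite_induct) (simp_all add: homog_one homog_mult)

lemma homog_unique: "F \<noteq> 0 \<Longrightarrow> homog a F \<Longrightarrow> homog b F \<Longrightarrow> a = b"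
  unfolding homog_def by (metis all_not_in_conv keys_eq_empty)

lemma alpha_le: "F \<in> J \<Longrightarrow> F \<noteq> 0 \<Longrightarrow> homog d F \<Longrightarrow> alpha J \<le> d"
  unfolding alpha_def by (rule Least_le) blast

lemma alpha_attained:
  assumes "F \<in> J" "F \<noteq> 0" "homog d F"
  obtains D where "D \<in> J" "D \<noteq> 0" "homog (alpha J) D"
proof -
  have "\<exists>F\<in>J. F \<noteq> 0 \<and> homog d F"
    using assms by blast
  then have "\<exists>D\<in>J. D \<noteq> 0 \<and> homog (alpha J) D"
    unfolding alpha_def by (rule LeastI)
  then show ?thesis
    using that by blast
qed

lemma mem_fat_ideal_iff:
  fixes P :: "nat \<Rightarrow> 3 \<Rightarrow> 'a::field_char_0"
  assumes "\<forall>i<r. \<exists>u. P i u \<noteq> 0" "F \<noteq> 0"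
  shows "F \<in> fat_ideal r P mults \<longleftrightarrow> (\<forall>i<r. mults i \<le> ord_pt (P i) F)"
  using mem_ideal_pow_pt_ideal_iff[OF _ assms(2)] assms(1) by (auto simp: fat_ideal_def)

lemma alpha_fat_ideal_le_add:
  fixes P :: "nat \<Rightarrow> 3 \<Rightarrow> 'a::field_char_0"
  assumes pts_nonzero: "\<forall>i<r. \<exists>u. P i u \<noteq> 0"
    and G: "G \<in> fat_ideal r P \<nu>" "G \<noteq> 0" "homog d G"
    and R: "R \<noteq> 0" "homog \<rho> R"
    and mults: "\<forall>i<r. \<mu> i \<le> \<nu> i + ord_pt (P i) R"
  shows "alpha (fat_ideal r P \<mu>) \<le> alpha (fat_ideal r P \<nu>) + \<rho>"
proof -
  obtain D where D: "D \<in> fat_ideal r P \<nu>" "D \<noteq> 0" "homog (alpha (fat_ideal r P \<nu>)) D"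
    using G by (rule alpha_attained)
  have "\<mu> i \<le> ord_pt (P i) (D * R)" if "i < r" for i
  proof -
    have "\<nu> i \<le> ord_pt (P i) D"
      using D(1) mem_fat_ideal_iff[OF pts_nonzero D(2)] that by blast
    then show ?thesis
      using mults that ord_pt_mult[OF _ D(2) R(1)] pts_nonzero by fastforce
  qed
  then have "D * R \<in> fat_ideal r P \<mu>"
    using mem_fat_ideal_iff[OF pts_nonzero] D(2) R(1) by simp
  moreover have "D * R \<noteq> 0"
    using D(2) R(1) by simp
  ultimately show ?thesis
    using alpha_le homog_mult[OF D(3) R(2)] by blast
qed

lemma alpha_fat_ideal_factor:
  fixes P :: "nat \<Rightarrow> 3 \<Rightarrow> 'a::field_char_0"
  assumes pts_nonzero: "\<forall>i<r. \<exists>u. P i u \<noteq> 0"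
    and G: "G \<noteq> 0" "homog \<gamma> G" and R: "R \<noteq> 0" "homog \<rho> R"
    and GR_deg: "homog (alpha (fat_ideal r P (\<lambda>_. m))) (G * R)"
    and GR_ord: "\<forall>i<r. m \<le> ord_pt (P i) (G * R)"
    and "n \<le> m"
  shows "\<gamma> = alpha (fat_ideal r P (\<lambda>i. ord_pt (P i) G))"
    and "int (alpha (fat_ideal r P (\<lambda>i. ord_pt (P i) G)))
           - int (alpha (fat_ideal r P (\<lambda>i. ord_pt (P i) G - (m - n))))
         \<le> int (alpha (fat_ideal r P (\<lambda>_. m))) - int (alpha (fat_ideal r P (\<lambda>_. n)))"
proof -
  have alpha_m: "alpha (fat_ideal r P (\<lambda>_. m)) = \<gamma> + \<rho>"
    using homog_unique[OF _ GR_deg homog_mult[OF G(2) R(2)]] G(1) R(1) by simp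
  have ord_split: "\<forall>i<r. m \<le> ord_pt (P i) G + ord_pt (P i) R"
    using GR_ord pts_nonzero ord_pt_mult[OF _ G(1) R(1)] by metis
  have G_mem: "G \<in> fat_ideal r P (\<lambda>i. ord_pt (P i) G)"
    "G \<in> fat_ideal r P (\<lambda>i. ord_pt (P i) G - (m - n))"
    using mem_fat_ideal_iff[OF pts_nonzero G(1)] by auto
  note le_add = alpha_fat_ideal_le_add[OF pts_nonzero _ G R]
  have "alpha (fat_ideal r P (\<lambda>i. ord_pt (P i) G)) \<le> \<gamma>"
    using alpha_le G_mem(1) G by blast
  moreover have "alpha (fat_ideal r P (\<lambda>_. m)) \<le> alpha (fat_ideal r P (\<lambda>i. ord_pt (P i) G)) + \<rho>"
    using le_add[OF G_mem(1)] ord_split by presburger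
  moreover have "alpha (fat_ideal r P (\<lambda>_. n)) \<le> alpha (fat_ideal r P (\<lambda>i. ord_pt (P i) G - (m - n))) + \<rho>"
    by (rule le_add[OF G_mem(2)]) (use ord_split \<open>n \<le> m\<close> in fastforce)
  ultimately show "\<gamma> = alpha (fat_ideal r P (\<lambda>i. ord_pt (P i) G))"
    and "int (alpha (fat_ideal r P (\<lambda>i. ord_pt (P i) G)))
           - int (alpha (fat_ideal r P (\<lambda>i. ord_pt (P i) G - (m - n))))
         \<le> int (alpha (fat_ideal r P (\<lambda>_. m))) - int (alpha (fat_ideal r P (\<lambda>_. n)))"
    using alpha_m by linarith+
qed

lemma factor_of_product:
  fixes G :: "nat \<Rightarrow> 'a::comm_ring_1 mpoly3"
  assumes "j < s" "1 \<le> a j" "\<forall>k<s. homog (tdeg (G k)) (G k)"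
  obtains R \<rho> where "Poly_Mapping.single 0 c * (\<Prod>k<s. G k ^ a k) = G j * R" "homog \<rho> R"
proof
  let ?R = "Poly_Mapping.single 0 c * G j ^ (a j - 1) * (\<Prod>k\<in>{..<s} - {j}. G k ^ a k)"
  have "(\<Prod>k<s. G k ^ a k) = G j ^ a j * (\<Prod>k\<in>{..<s} - {j}. G k ^ a k)"
    using assms(1) by (simp add: prod.remove)
  moreover have "G j ^ a j = G j * G j ^ (a j - 1)"
    using assms(2) by (simp add: power_eq_if)
  ultimately show "Poly_Mapping.single 0 c * (\<Prod>k<s. G k ^ a k) = G j * ?R"
    by (simp add: ac_simps)
  show "homog (0 + (a j - 1) * tdeg (G j) + (\<Sum>k\<in>{..<s} - {j}. a k * tdeg (G k))) ?R"
    using assms by (intro homog_mult homog_const homog_power homog_prod) auto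
qed

theorem corollary2p2:
  fixes P :: "nat \<Rightarrow> 3 \<Rightarrow> 'a::field_char_0"
    and r m n s :: nat
    and F :: "'a mpoly3"
    and G :: "nat \<Rightarrow> 'a mpoly3"
    and a :: "nat \<Rightarrow> nat"
    and c :: 'a
  assumes alg_closed: "\<forall>p :: 'a poly. degree p > 0 \<longrightarrow> (\<exists>x. poly p x = 0)"
    and pts_nonzero: "\<forall>i<r. \<exists>u. P i u \<noteq> 0"
    and pts_distinct: "\<forall>i<r. \<forall>k<r. i \<noteq> k \<longrightarrow> \<not> (\<exists>t. P i = (\<lambda>u. t * P k u))"
    and n_pos: "0 < n" and mn: "n < m"
    and F_nonzero: "F \<noteq> 0"
    and F_deg: "homog (alpha (fat_ideal r P (\<lambda>_. m))) F"
    and F_ord: "\<forall>i<r. m \<le> ord_pt (P i) F"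
    and F_decomp: "c \<noteq> 0" "F = Poly_Mapping.single 0 c * (\<Prod>j<s. G j ^ a j)"
    and G_irred: "\<forall>j<s. irreducible (G j)"
    and G_homog: "\<forall>j<s. homog (tdeg (G j)) (G j)"
    and G_distinct: "\<forall>j<s. \<forall>k<s. j \<noteq> k \<longrightarrow> \<not> (G j dvd G k \<and> G k dvd G j)"
    and a_pos: "\<forall>j<s. 1 \<le> a j"
  shows "\<forall>j<s.
     tdeg (G j) = alpha (fat_ideal r P (\<lambda>i. ord_pt (P i) (G j))) \<and>
     int (alpha (fat_ideal r P (\<lambda>i. ord_pt (P i) (G j))))
       - int (alpha (fat_ideal r P (\<lambda>i. ord_pt (P i) (G j) - (m - n))))
     \<le> int (alpha (fat_ideal r P (\<lambda>_. m))) - int (alpha (fat_ideal r P (\<lambda>_. n)))"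
proof (intro allI impI)
  fix j assume j: "j < s"
  obtain R \<rho> where F_eq: "F = G j * R" and R_homog: "homog \<rho> R"
    using factor_of_product[OF j _ G_homog] a_pos j F_decomp(2) by metis
  have G_nonzero: "G j \<noteq> 0"
    using G_irred j not_irreducible_zero by metis
  have R_nonzero: "R \<noteq> 0"
    using F_nonzero F_eq by auto
  have GR: "homog (alpha (fat_ideal r P (\<lambda>_. m))) (G j * R)" "\<forall>i<r. m \<le> ord_pt (P i) (G j * R)"
    using F_deg F_ord F_eq by simp_all
  show "tdeg (G j) = alpha (fat_ideal r P (\<lambda>i. ord_pt (P i) (G j))) \<and>
     int (alpha (fat_ideal r P (\<lambda>i. ord_pt (P i) (G j))))
       - int (alpha (fat_ideal r P (\<lambda>i. ord_pt (P i) (G j) - (m - n))))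
     \<le> int (alpha (fat_ideal r P (\<lambda>_. m))) - int (alpha (fat_ideal r P (\<lambda>_. n)))"
    using alpha_fat_ideal_factor[OF pts_nonzero G_nonzero G_homog[rule_format, OF j]
        R_nonzero R_homog GR less_imp_le[OF mn]] by blast
qed

end
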